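(* Let $P$ be a finite poset, $\epsilon\in\{1,-1\}$, $\xi\in S^{(\epsilon)}$ and $d=\xi(-\infty)$. Then $T^\xi$ is not a generator of $\omega^{(\epsilon)}$ if and only if there is an antichain $A$ of $P$ (possibly empty) such that for every $C\in C_\xi^{[d-\epsilon]}$ we have $C\cap A\neq\emptyset$ and $\xi(a)>\epsilon$ for the unique element $a\in C\cap A$ (the condition holds trivially when $C_\xi^{[d-\epsilon]}=\emptyset$).
   Context: $P^-=P\cup\{-\infty\}$; $\xi^+(B)=\sum_{b\in B}\xi(b)$. $S^{(m)}=\{\xi\in\mathbb Z^{P^-}:\xi(x)\ge m\ \forall x\in P,\ \xi(-\infty)\ge\xi^+(C)+m$ for every maximal chain $C$ of $P\}$. $C_\xi^{[m]}$ is the set of maximal chains $C$ of $P$ with $\xi^+(C)=m$. $T^\xi=\prod_{x\in P^-}T_x^{\xi(x)}$, $\deg T^\xi=\xi(-\infty)$. $R=\mathbb K[\mathcal C(P)]=\bigoplus_{\xi\in S^{(0)}}\mathbb KT^\xi$ is the Ehrhart ring of the chain polytope, $\omega^{(1)}=\omega=\bigoplus_{\xi\in S^{(1)}}\mathbb KT^\xi$ its canonical ideal and $\omega^{(-1)}=R:\omega=\bigoplus_{\xi\in S^{(-1)}}\mathbb KT^\xi$ its anticanonical ideal. A Laurent monomial $T^\xi\in\omega^{(\epsilon)}$ is a generator of $\omega^{(\epsilon)}$ if it belongs to the (unique) minimal monomial generating set of the $R$-module $\omega^{(\epsilon)}$, i.e. it is not of the form $T^{\xi_1}T^{\xi_2}$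 with $\xi_1\in S^{(0)}$, $\xi_1(-\infty)>0$, $\xi_2\in S^{(\epsilon)}$. *)

theory Defs
  imports Main
begin

(* A finite poset is a finite carrier P with a partial order le on P.
   P^- = P \<union> {-\<infinity>} is modelled as 'a option: None = -\<infinity>, Some x = x \<in> P.
   Elements of \<int>^{P^-} are functions 'a option \<Rightarrow> int (only values on P^- matter). *)

definition is_poset :: "'a set \<Rightarrow> ('a \<Rightarrow> 'a \<Rightarrow> bool) \<Rightarrow> bool" where
  "is_poset P le \<longleftrightarrow>
     (\<forall>x\<in>P. le x x) \<and>
     (\<forall>x\<in>P. \<forall>y\<in>P. le x y \<and> le y x \<longrightarrow> x = y) \<and>
     (\<forall>x\<in>P. \<forall>y\<in>P. \<forall>z\<in>P. le x y \<and> le y z \<longrightarrow> le x z)"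

definition is_chain :: "'a set \<Rightarrow> ('a \<Rightarrow> 'a \<Rightarrow> bool) \<Rightarrow> 'a set \<Rightarrow> bool" where
  "is_chain P le C \<longleftrightarrow> C \<subseteq> P \<and> (\<forall>x\<in>C. \<forall>y\<in>C. le x y \<or> le y x)"

definition is_maximal_chain :: "'a set \<Rightarrow> ('a \<Rightarrow> 'a \<Rightarrow> bool) \<Rightarrow> 'a set \<Rightarrow> bool" where
  "is_maximal_chain P le C \<longleftrightarrow>
     is_chain P le C \<and> (\<forall>D. is_chain P le D \<and> C \<subseteq> D \<longrightarrow> D = C)"

definition is_antichain :: "'a set \<Rightarrow> ('a \<Rightarrow> 'a \<Rightarrow> bool) \<Rightarrow> 'a set \<Rightarrow> bool" where
  "is_antichain P le A \<longleftrightarrow> A \<subseteq> P \<and> (\<forall>x\<in>A. \<forall>y\<in>A. le x y \<longrightarrow> x = y)"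

definition xi_plus :: "('a option \<Rightarrow> int) \<Rightarrow> 'a set \<Rightarrow> int" where
  "xi_plus \<xi> B = (\<Sum>b\<in>B. \<xi> (Some b))"

definition S_set :: "'a set \<Rightarrow> ('a \<Rightarrow> 'a \<Rightarrow> bool) \<Rightarrow> int \<Rightarrow> ('a option \<Rightarrow> int) set" where
  "S_set P le m = {\<xi>. (\<forall>x\<in>P. \<xi> (Some x) \<ge> m) \<and>
      (\<forall>C. is_maximal_chain P le C \<longrightarrow> \<xi> None \<ge> xi_plus \<xi> C + m)}"

definition C_xi :: "'a set \<Rightarrow> ('a \<Rightarrow> 'a \<Rightarrow> bool) \<Rightarrow> ('a option \<Rightarrow> int) \<Rightarrow> int \<Rightarrow> 'a set set" where
  "C_xi P le \<xi> m = {C. is_maximal_chain P le C \<and> xi_plus \<xi> C = m}"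

(* T^\<xi> is a generator of \<omega>^{(\<epsilon>)}: T^\<xi> \<in> \<omega>^{(\<epsilon>)} and T^\<xi> is not T^{\<xi>1} T^{\<xi>2}
   with \<xi>1 \<in> S^{(0)}, \<xi>1(-\<infinity>) > 0, \<xi>2 \<in> S^{(\<epsilon>)} (equality of exponents on P^-). *)
definition is_generator :: "'a set \<Rightarrow> ('a \<Rightarrow> 'a \<Rightarrow> bool) \<Rightarrow> int \<Rightarrow> ('a option \<Rightarrow> int) \<Rightarrow> bool" where
  "is_generator P le \<epsilon> \<xi> \<longleftrightarrow> \<xi> \<in> S_set P le \<epsilon> \<and>
     \<not> (\<exists>\<xi>1 \<xi>2. \<xi>1 \<in> S_set P le 0 \<and> \<xi>1 None > 0 \<and> \<xi>2 \<in> S_set P le \<epsilon> \<and>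
            \<xi> None = \<xi>1 None + \<xi>2 None \<and>
            (\<forall>x\<in>P. \<xi> (Some x) = \<xi>1 (Some x) + \<xi>2 (Some x)))"

end

theory Submission
  imports Defs
begin

text \<open>
  If \<open>T^\<xi> = T^\<xi>\<^sub>1 T^\<xi>\<^sub>2\<close> with \<open>\<xi>\<^sub>1 \<in> S^(0)\<close> of positive degree and \<open>\<xi>\<^sub>2 \<in> S^(\<epsilon>)\<close>,
  then every maximal chain with \<open>\<xi>^+(C) = d - \<epsilon>\<close> is tight for \<open>\<xi>\<^sub>1\<close>, i.e.
  \<open>\<xi>\<^sub>1^+(C) = \<xi>\<^sub>1(-\<infinity>) > 0\<close>. A tight chain passes through a minimal element of the
  support of \<open>\<xi>\<^sub>1\<close>: otherwise, replacing the part of the chain below its lowest support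
  element \<open>c\<close> by a support element \<open>y < c\<close> gives a chain of larger \<open>\<xi>\<^sub>1\<close>-weight.
  So the minimal elements of the support form the antichain, and \<open>\<xi> = \<xi>\<^sub>1 + \<xi>\<^sub>2 > \<epsilon>\<close> on it.
  Conversely, the degree one monomial \<open>T_-\<infinity> \<Prod>a\<in>A. T_a\<close> of \<open>R\<close> (with \<open>A\<close> shrunk to
  where \<open>\<xi> > \<epsilon>\<close>) has weight one exactly on the chains meeting \<open>A\<close>, so it splits off
  from \<open>T^\<xi>\<close> inside \<open>\<omega>^(\<epsilon>)\<close>. Neither direction needs \<open>\<epsilon> \<in> {1, -1}\<close>.
\<close>

lemma is_posetD:
  assumes "is_poset P le"
  shows poset_refl: "x \<in> P \<Longrightarrow> le x x"
    and poset_antisym: "\<lbrakk>x \<in> P; y \<in> P; le x y; le y x\<rbrakk> \<Longrightarrow> x = y"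
    and poset_trans: "\<lbrakk>x \<in> P; y \<in> P; z \<in> P; le x y; le y z\<rbrakk> \<Longrightarrow> le x z"
  using assms unfolding is_poset_def by blast+

lemma is_maximal_chain_is_chain: "is_maximal_chain P le C \<Longrightarrow> is_chain P le C"
  by (simp add: is_maximal_chain_def)

lemma is_chain_subset: "is_chain P le C \<Longrightarrow> C \<subseteq> P"
  by (simp add: is_chain_def)

lemma is_chain_comparable: "\<lbrakk>is_chain P le C; x \<in> C; y \<in> C\<rbrakk> \<Longrightarrow> le x y \<or> le y x"
  by (simp add: is_chain_def)

lemma poset_finite_has_minimal:
  assumes "is_poset P le" "finite S" "S \<noteq> {}" "S \<subseteq> P"
  shows "\<exists>m\<in>S. \<forall>y\<in>S. le y m \<longrightarrow> y = m"
  using assms(2-4)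
proof (induction S rule: finite_ne_induct)
  case (singleton x)
  then show ?case by simp
next
  case (insert x S)
  then obtain m where m: "m \<in> S" "\<forall>y\<in>S. le y m \<longrightarrow> y = m"
    by auto
  have xP: "x \<in> P" and SP: "S \<subseteq> P"
    using insert.prems by auto
  show ?case
  proof (cases "le x m \<and> x \<noteq> m")
    case True
    have "y = x" if "y \<in> S" "le y x" for y
    proof -
      have "le y m"
        using poset_trans[OF assms(1)] that True m(1) xP SP by blast
      then have "y = m"
        using m(2) that(1) by blast
      then show ?thesis
        using poset_antisym[OF assms(1) xP] True that(2) m(1) SP by blast
    qed
    then show ?thesis by blast
  next
    case False
    with m show ?thesis by blast
  qed
qed

lemma chain_extends_to_maximal_chain:
  assumes "finite P" "is_chain P le D"
  shows "\<exists>M. is_maximal_chain P le M \<and> D \<subseteq> M"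
proof -
  define X where "X = {E. is_chain P le E \<and> D \<subseteq> E}"
  have "finite X"
    using assms(1) by (rule finite_subset[rotated, OF finite_Pow_iff[THEN iffD2]])
      (auto simp: X_def is_chain_def)
  moreover have "X \<noteq> {}"
    using assms(2) X_def by blast
  ultimately obtain M where "M \<in> X" "\<forall>E\<in>X. M \<subseteq> E \<longrightarrow> M = E"
    using finite_has_maximal by blast
  then show ?thesis
    unfolding is_maximal_chain_def X_def by blast
qed

lemma xi_plus_mono:
  assumes "finite M" "B \<subseteq> M" "\<forall>x\<in>M. \<eta> (Some x) \<ge> 0"
  shows "xi_plus \<eta> B \<le> xi_plus \<eta> M"
  unfolding xi_plus_def using assms by (intro sum_mono2) auto

lemma xi_plus_add:
  assumes "C \<subseteq> P" "\<forall>x\<in>P. \<xi> (Some x) = \<xi>\<^sub>1 (Some x) + \<xi>\<^sub>2 (Some x)"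
  shows "xi_plus \<xi> C = xi_plus \<xi>\<^sub>1 C + xi_plus \<xi>\<^sub>2 C"
  unfolding xi_plus_def sum.distrib[symmetric] using assms by (intro sum.cong) auto

definition minimal_support :: "'a set \<Rightarrow> ('a \<Rightarrow> 'a \<Rightarrow> bool) \<Rightarrow> ('a option \<Rightarrow> int) \<Rightarrow> 'a set" where
  "minimal_support P le \<eta> =
     {a\<in>P. \<eta> (Some a) > 0 \<and> (\<forall>y\<in>P. \<eta> (Some y) > 0 \<and> le y a \<longrightarrow> y = a)}"

lemma is_antichain_minimal_support: "is_antichain P le (minimal_support P le \<eta>)"
  unfolding is_antichain_def minimal_support_def by auto

lemma is_chain_insert_below_upper_part:
  assumes "is_poset P le" "is_chain P le C" "c \<in> C" "y \<in> P" "le y c"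
  shows "is_chain P le (insert y {z\<in>C. le c z})"
  unfolding is_chain_def
proof (intro conjI ballI)
  have CP: "C \<subseteq> P"
    using assms(2) by (rule is_chain_subset)
  then show "insert y {z\<in>C. le c z} \<subseteq> P"
    using assms(4) by blast
  have below: "le y z" if "z \<in> C" "le c z" for z
    using poset_trans[OF assms(1) assms(4) _ _ assms(5) that(2)] that(1) assms(3) CP by blast
  fix u v
  assume "u \<in> insert y {z\<in>C. le c z}" "v \<in> insert y {z\<in>C. le c z}"
  then show "le u v \<or> le v u"
    using below poset_refl[OF assms(1,4)] is_chain_comparable[OF assms(2)] by blast
qed

lemma xi_plus_upper_part:
  assumes "is_poset P le" "is_chain P le C" "finite C" "c \<in> C"
    and nonneg: "\<forall>z\<in>C. \<eta> (Some z) \<ge> 0"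
    and minimal: "\<forall>z\<in>C. \<eta> (Some z) > 0 \<and> le z c \<longrightarrow> z = c"
  shows "xi_plus \<eta> {z\<in>C. le c z} = xi_plus \<eta> C"
proof -
  have "\<eta> (Some z) = 0" if "z \<in> C" "\<not> le c z" for z
  proof -
    have "le c c"
      using assms(4) is_chain_subset[OF assms(2)] poset_refl[OF assms(1)] by blast
    with that have "z \<noteq> c"
      by blast
    moreover have "le z c"
      using is_chain_comparable[OF assms(2) that(1) assms(4)] that(2) by blast
    ultimately have "\<not> \<eta> (Some z) > 0"
      using minimal that(1) by blast
    then show ?thesis
      using nonneg that(1) by force
  qed
  then show ?thesis
    unfolding xi_plus_def using assms(3)
    by (intro sum.mono_neutral_left) (auto simp del: not_le)
qed

lemma tight_maximal_chain_meets_minimal_support: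
  assumes "finite P" "is_poset P le" "\<eta> \<in> S_set P le 0"
    and C: "is_maximal_chain P le C"
    and tight: "xi_plus \<eta> C = \<eta> None" and "\<eta> None > 0"
  shows "C \<inter> minimal_support P le \<eta> \<noteq> {}"
proof -
  have nonneg: "\<forall>x\<in>P. \<eta> (Some x) \<ge> 0"
    and bound: "\<And>M. is_maximal_chain P le M \<Longrightarrow> xi_plus \<eta> M \<le> \<eta> None"
    using assms(3) unfolding S_set_def by auto
  have chain: "is_chain P le C"
    using C by (rule is_maximal_chain_is_chain)
  then have CP: "C \<subseteq> P"
    by (rule is_chain_subset)
  then have "finite C"
    using assms(1) finite_subset by blast
  let ?S = "{z\<in>C. \<eta> (Some z) > 0}"
  have "?S \<noteq> {}"
  proof
    assume "?S = {}"
    with CP nonneg have "xi_plus \<eta> C = 0"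
      unfolding xi_plus_def by (intro sum.neutral) force
    with tight \<open>\<eta> None > 0\<close> show False by simp
  qed
  then obtain c where c: "c \<in> ?S" "\<forall>z\<in>?S. le z c \<longrightarrow> z = c"
    using poset_finite_has_minimal[OF assms(2), of ?S] \<open>finite C\<close> CP by auto
  have "y = c" if y: "y \<in> P" "\<eta> (Some y) > 0" "le y c" for y
  proof (rule ccontr)
    assume "y \<noteq> c"
    with c y have "y \<notin> C" by blast
    let ?U = "{z\<in>C. le c z}"
    have "c \<in> C"
      using c(1) by blast
    obtain M where M: "is_maximal_chain P le M" "insert y ?U \<subseteq> M"
      using chain_extends_to_maximal_chain[OF assms(1)
          is_chain_insert_below_upper_part[OF assms(2) chain \<open>c \<in> C\<close> y(1,3)]]
      by blast
    have "M \<subseteq> P"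
      using is_chain_subset[OF is_maximal_chain_is_chain[OF M(1)]] .
    then have "finite M"
      using assms(1) finite_subset by blast
    then have "xi_plus \<eta> (insert y ?U) \<le> xi_plus \<eta> M"
      using M(2) nonneg \<open>M \<subseteq> P\<close> by (intro xi_plus_mono) auto
    also have "\<dots> \<le> \<eta> None"
      using bound M(1) .
    finally have "\<eta> (Some y) + xi_plus \<eta> ?U \<le> \<eta> None"
      using \<open>y \<notin> C\<close> \<open>finite C\<close> by (simp add: xi_plus_def)
    moreover have "xi_plus \<eta> ?U = xi_plus \<eta> C"
      using c CP nonneg
      by (intro xi_plus_upper_part[OF assms(2) chain \<open>finite C\<close> \<open>c \<in> C\<close>]) auto
    ultimately show False
      using tight y(2) by linarith
  qed
  then have "c \<in> minimal_support P le \<eta>"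
    using c CP unfolding minimal_support_def by auto
  with c show ?thesis by blast
qed

lemma not_generator_imp_antichain_cover:
  assumes "finite P" "is_poset P le" "\<not> is_generator P le \<epsilon> \<xi>" "\<xi> \<in> S_set P le \<epsilon>"
  shows "\<exists>A. is_antichain P le A \<and>
    (\<forall>C\<in>C_xi P le \<xi> (\<xi> None - \<epsilon>). C \<inter> A \<noteq> {} \<and> (\<forall>a\<in>C \<inter> A. \<xi> (Some a) > \<epsilon>))"
proof -
  obtain \<xi>\<^sub>1 \<xi>\<^sub>2 where \<xi>\<^sub>1: "\<xi>\<^sub>1 \<in> S_set P le 0" "\<xi>\<^sub>1 None > 0"
    and \<xi>\<^sub>2: "\<xi>\<^sub>2 \<in> S_set P le \<epsilon>"
    and sum_None: "\<xi> None = \<xi>\<^sub>1 None + \<xi>\<^sub>2 None"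
    and sum_Some: "\<forall>x\<in>P. \<xi> (Some x) = \<xi>\<^sub>1 (Some x) + \<xi>\<^sub>2 (Some x)"
    using assms(3,4) unfolding is_generator_def by blast
  let ?A = "minimal_support P le \<xi>\<^sub>1"
  have "C \<inter> ?A \<noteq> {}" if "C \<in> C_xi P le \<xi> (\<xi> None - \<epsilon>)" for C
  proof -
    have C: "is_maximal_chain P le C" "xi_plus \<xi> C = \<xi> None - \<epsilon>"
      using that unfolding C_xi_def by auto
    then have "xi_plus \<xi> C = xi_plus \<xi>\<^sub>1 C + xi_plus \<xi>\<^sub>2 C"
      using xi_plus_add[OF is_chain_subset[OF is_maximal_chain_is_chain] sum_Some] by blast
    moreover have "xi_plus \<xi>\<^sub>1 C \<le> \<xi>\<^sub>1 None" "xi_plus \<xi>\<^sub>2 C + \<epsilon> \<le> \<xi>\<^sub>2 None"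
      using \<xi>\<^sub>1(1) \<xi>\<^sub>2 C(1) unfolding S_set_def by auto
    ultimately have "xi_plus \<xi>\<^sub>1 C = \<xi>\<^sub>1 None"
      using C(2) sum_None by linarith
    then show ?thesis
      using tight_maximal_chain_meets_minimal_support[OF assms(1,2) \<xi>\<^sub>1(1) C(1)] \<xi>\<^sub>1(2)
      by blast
  qed
  moreover have "\<xi> (Some a) > \<epsilon>" if "a \<in> ?A" for a
  proof -
    have "a \<in> P" "\<xi>\<^sub>1 (Some a) > 0" "\<xi>\<^sub>2 (Some a) \<ge> \<epsilon>"
      using that \<xi>\<^sub>2 unfolding minimal_support_def S_set_def by auto
    with sum_Some show ?thesis
      by force
  qed
  ultimately show ?thesis
    using is_antichain_minimal_support[of P le \<xi>\<^sub>1] by blast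
qed

text \<open>The exponent vector of the degree one monomial \<open>T_-\<infinity> \<Prod>a\<in>A. T_a\<close>.\<close>

definition antichain_monomial :: "'a set \<Rightarrow> 'a option \<Rightarrow> int" where
  "antichain_monomial A = (\<lambda>u. case u of None \<Rightarrow> 1 | Some x \<Rightarrow> if x \<in> A then 1 else 0)"

lemma xi_plus_antichain_monomial:
  assumes "is_chain P le C" "finite C" "is_antichain P le A"
  shows "xi_plus (antichain_monomial A) C = (if C \<inter> A = {} then 0 else 1)"
proof -
  have "xi_plus (antichain_monomial A) C = int (card (C \<inter> A))"
    unfolding xi_plus_def antichain_monomial_def using assms(2) by (simp add: sum.If_cases)
  moreover have "card (C \<inter> A) \<le> Suc 0"
  proof (subst card_le_Suc0_iff_eq)
    show "finite (C \<inter> A)"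
      using assms(2) by blast
    show "\<forall>a\<in>C \<inter> A. \<forall>b\<in>C \<inter> A. a = b"
      using assms(1,3) unfolding is_chain_def is_antichain_def by blast
  qed
  ultimately show ?thesis
    using assms(2) by (auto simp: le_Suc_eq)
qed

lemma antichain_monomial_in_S_set:
  assumes "finite P" "is_antichain P le A"
  shows "antichain_monomial A \<in> S_set P le 0"
proof -
  have "xi_plus (antichain_monomial A) C \<le> 1" if "is_maximal_chain P le C" for C
  proof -
    have chain: "is_chain P le C"
      using that by (rule is_maximal_chain_is_chain)
    moreover have "finite C"
      using is_chain_subset[OF chain] assms(1) finite_subset by blast
    ultimately show ?thesis
      using xi_plus_antichain_monomial[OF _ _ assms(2)] by simp
  qed
  then show ?thesis
    unfolding S_set_def by (auto simp: antichain_monomial_def)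
qed

lemma S_set_diff_antichain_monomial:
  assumes "finite P" "\<xi> \<in> S_set P le \<epsilon>" "is_antichain P le A"
    and above: "\<forall>a\<in>A. \<xi> (Some a) > \<epsilon>"
    and cover: "\<forall>C\<in>C_xi P le \<xi> (\<xi> None - \<epsilon>). C \<inter> A \<noteq> {}"
  shows "(\<lambda>u. \<xi> u - antichain_monomial A u) \<in> S_set P le \<epsilon>"
proof -
  have "xi_plus \<xi> C - xi_plus (antichain_monomial A) C + \<epsilon> \<le> \<xi> None - 1"
    if C: "is_maximal_chain P le C" for C
  proof -
    have chain: "is_chain P le C"
      using C by (rule is_maximal_chain_is_chain)
    moreover have "finite C"
      using is_chain_subset[OF chain] assms(1) finite_subset by blast
    ultimately have weight:
      "xi_plus (antichain_monomial A) C = (if C \<inter> A = {} then 0 else 1)"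
      using assms(3) by (rule xi_plus_antichain_monomial)
    have "xi_plus \<xi> C + \<epsilon> \<le> \<xi> None"
      using assms(2) C unfolding S_set_def by auto
    then consider "xi_plus \<xi> C = \<xi> None - \<epsilon>" | "xi_plus \<xi> C + \<epsilon> \<le> \<xi> None - 1"
      by linarith
    then show ?thesis
    proof cases
      case 1
      with C cover have "C \<inter> A \<noteq> {}"
        unfolding C_xi_def by auto
      with 1 weight show ?thesis by simp
    next
      case 2
      with weight show ?thesis by simp
    qed
  qed
  moreover have "\<xi> (Some x) - antichain_monomial A (Some x) \<ge> \<epsilon>" if "x \<in> P" for x
    using that assms(2) above unfolding S_set_def antichain_monomial_def by force
  ultimately show ?thesis
    unfolding S_set_def xi_plus_def
    by (auto simp: sum_subtractf antichain_monomial_def)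
qed

lemma antichain_cover_imp_not_generator:
  assumes "finite P" "\<xi> \<in> S_set P le \<epsilon>" "is_antichain P le A"
    and "\<forall>C\<in>C_xi P le \<xi> (\<xi> None - \<epsilon>). C \<inter> A \<noteq> {} \<and> (\<forall>a\<in>C \<inter> A. \<xi> (Some a) > \<epsilon>)"
  shows "\<not> is_generator P le \<epsilon> \<xi>"
proof -
  define A' where "A' = {a\<in>A. \<xi> (Some a) > \<epsilon>}"
  have "is_antichain P le A'"
    using assms(3) unfolding is_antichain_def A'_def by auto
  moreover have "\<forall>C\<in>C_xi P le \<xi> (\<xi> None - \<epsilon>). C \<inter> A' \<noteq> {}"
    using assms(4) unfolding A'_def by blast
  ultimately have "antichain_monomial A' \<in> S_set P le 0"
    "(\<lambda>u. \<xi> u - antichain_monomial A' u) \<in> S_set P le \<epsilon>"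
    using antichain_monomial_in_S_set[OF assms(1)] S_set_diff_antichain_monomial[OF assms(1,2)]
    unfolding A'_def by auto
  moreover have "antichain_monomial A' None > 0"
    by (simp add: antichain_monomial_def)
  ultimately have "\<exists>\<xi>\<^sub>1 \<xi>\<^sub>2. \<xi>\<^sub>1 \<in> S_set P le 0 \<and> \<xi>\<^sub>1 None > 0 \<and> \<xi>\<^sub>2 \<in> S_set P le \<epsilon> \<and>
      \<xi> None = \<xi>\<^sub>1 None + \<xi>\<^sub>2 None \<and> (\<forall>x\<in>P. \<xi> (Some x) = \<xi>\<^sub>1 (Some x) + \<xi>\<^sub>2 (Some x))"
    by (intro exI[of _ "antichain_monomial A'"] exI[of _ "\<lambda>u. \<xi> u - antichain_monomial A' u"])
      simp
  then show ?thesis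
    unfolding is_generator_def by blast
qed

theorem mainTheorem7:
  fixes P :: "'a set" and le :: "'a \<Rightarrow> 'a \<Rightarrow> bool"
    and \<epsilon> :: int and \<xi> :: "'a option \<Rightarrow> int" and d :: int
  assumes "finite P" and "is_poset P le"
    and "\<epsilon> \<in> {1, -1}"
    and "\<xi> \<in> S_set P le \<epsilon>"
    and "d = \<xi> None"
  shows "\<not> is_generator P le \<epsilon> \<xi> \<longleftrightarrow>
    (\<exists>A. is_antichain P le A \<and>
       (\<forall>C\<in>C_xi P le \<xi> (d - \<epsilon>). C \<inter> A \<noteq> {} \<and> (\<forall>a\<in>C \<inter> A. \<xi> (Some a) > \<epsilon>)))"
  unfolding \<open>d = \<xi> None\<close>
proof
  show "\<not> is_generator P le \<epsilon> \<xi> \<Longrightarrow> \<exists>A. is_antichain P le A \<and>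
      (\<forall>C\<in>C_xi P le \<xi> (\<xi> None - \<epsilon>). C \<inter> A \<noteq> {} \<and> (\<forall>a\<in>C \<inter> A. \<xi> (Some a) > \<epsilon>))"
    using not_generator_imp_antichain_cover[OF assms(1,2) _ assms(4)] .
next
  assume "\<exists>A. is_antichain P le A \<and>
      (\<forall>C\<in>C_xi P le \<xi> (\<xi> None - \<epsilon>). C \<inter> A \<noteq> {} \<and> (\<forall>a\<in>C \<inter> A. \<xi> (Some a) > \<epsilon>))"
  then show "\<not> is_generator P le \<epsilon> \<xi>"
    using antichain_cover_imp_not_generator[OF assms(1,4)] by blast
qed

end
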